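(* Let $m>0$, let $S:M\to\mathbb{R}$ be a smooth function and let $\digamma_0$ be a smooth section of the even Clifford bundle $\mathcal{C\ell}^0(M,\eta)$ which is invertible at every point and satisfies $$-\boldsymbol{\partial}S=m\,\digamma_0\gamma^{0}\digamma_0^{-1}.$$ Put $\digamma=\digamma_0\,e^{S\gamma^{21}}$. If $\digamma$ satisfies the free Dirac-Hestenes equation $$\boldsymbol{\partial}\digamma\,\gamma^{21}-m\,\digamma\gamma^{0}=0,$$ then $\digamma_0$ satisfies the massless Dirac-Hestenes equation $\boldsymbol{\partial}\digamma_0=0$.
   Context: Minkowski spacetime $M\simeq\mathbb{R}^4$ with metric $\eta=\mathrm{diag}(1,-1,-1,-1)$ and global coordinates $\{x^\mu\}$. The $1$-forms $\gamma^\mu=dx^\mu$ are regarded as sections of the Clifford bundle of differential forms $\mathcal{C\ell}(M,\eta)$; juxtaposition denotes the Clifford product, with $\gamma^\mu\gamma^\nu+\gamma^\nu\gamma^\mu=2\eta^{\mu\nu}$. $\gamma^{21}:=\gamma^2\gamma^1$ (so $(\gamma^{21})^2=-1$) and $e^{S\gamma^{21}}=\cos S+\gamma^{21}\sin S$. The Dirac operator is $\boldsymbol{\partial}=\gamma^\mu\partial_\mu$, acting on a Clifford field $\psi$ by $\boldsymbol{\partial}\psi=\gamma^\mu(\partial_\mu\psi)$ (left Clifford multiplication); on a scalar function it gives $\boldsymbol{\partial}S=\gamma^\mu\partial_\mu S=dS$. $\mathcal{C\ell}^0(M,\eta)$ is the even subbundle (sums of $0$-, $2$- and $4$-forms). 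*)

theory Defs
  imports "HOL-Analysis.Analysis"
begin

text \<open>Real Clifford algebra of Minkowski spacetime, metric diag(1,-1,-1,-1).
  A multivector is a real vector indexed by blades, i.e. subsets A of the
  index type 4 = {0,1,2,3}; the basis blade for A = {a1 < ... < ak} is
  gamma^a1 ... gamma^ak (the empty set gives the scalar 1).\<close>

type_synonym mv = "real ^ (4 set)"

definition eta :: "4 \<Rightarrow> real" where
  "eta i = (if i = 0 then 1 else -1)"

text \<open>Sign in the product of basis blades: e_A e_B = blade_sign A B e_(A symdiff B).\<close>
definition blade_sign :: "4 set \<Rightarrow> 4 set \<Rightarrow> real" where
  "blade_sign A B =
     (-1) ^ card {(i, j). i \<in> A \<and> j \<in> B \<and> j < i} * (\<Prod>i\<in>A \<inter> B. eta i)"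

definition cl_mult :: "mv \<Rightarrow> mv \<Rightarrow> mv" (infixl "\<odot>" 70) where
  "a \<odot> b = (\<chi> C. \<Sum>A\<in>UNIV. \<Sum>B\<in>UNIV.
      if (A - B) \<union> (B - A) = C then blade_sign A B * (a $ A) * (b $ B) else 0)"

definition scal :: "real \<Rightarrow> mv" where
  "scal r = (\<chi> A. if A = {} then r else 0)"

definition gam :: "4 \<Rightarrow> mv" where
  "gam \<mu> = (\<chi> A. if A = {\<mu>} then 1 else 0)"

definition gam21 :: mv where
  "gam21 = gam 2 \<odot> gam 1"

text \<open>e^{S gamma^21} = cos S + gamma^21 sin S\<close>
definition exp21 :: "real \<Rightarrow> mv" where
  "exp21 s = scal (cos s) + sin s *\<^sub>R gam21"

definition cl_invertible :: "mv \<Rightarrow> bool" where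
  "cl_invertible a \<longleftrightarrow> (\<exists>b. a \<odot> b = scal 1 \<and> b \<odot> a = scal 1)"

definition cl_inv :: "mv \<Rightarrow> mv" where
  "cl_inv a = (SOME b. a \<odot> b = scal 1 \<and> b \<odot> a = scal 1)"

definition even_mv :: "mv \<Rightarrow> bool" where
  "even_mv a \<longleftrightarrow> (\<forall>A. odd (card A) \<longrightarrow> a $ A = 0)"

fun Ck :: "nat \<Rightarrow> (real^4 \<Rightarrow> 'b::real_normed_vector) \<Rightarrow> bool" where
  "Ck 0 f = continuous_on UNIV f"
| "Ck (Suc k) f = ((\<forall>x. f differentiable (at x)) \<and>
      (\<forall>v. Ck k (\<lambda>x. frechet_derivative f (at x) v)))"

definition smooth :: "(real^4 \<Rightarrow> 'b::real_normed_vector) \<Rightarrow> bool" where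
  "smooth f \<longleftrightarrow> (\<forall>k. Ck k f)"

definition pd :: "4 \<Rightarrow> (real^4 \<Rightarrow> 'b::real_normed_vector) \<Rightarrow> real^4 \<Rightarrow> 'b" where
  "pd \<mu> f x = frechet_derivative f (at x) (axis \<mu> 1)"

definition dirac :: "(real^4 \<Rightarrow> mv) \<Rightarrow> real^4 \<Rightarrow> mv" where
  "dirac \<psi> x = (\<Sum>\<mu>\<in>UNIV. gam \<mu> \<odot> pd \<mu> \<psi> x)"

end

theory Submission
  imports Defs
begin

text \<open>Write \<open>E = e^{S\<gamma>21}\<close>. The Leibniz rule gives
  \<open>\<partial>(F0 E) = (\<partial>S) F0 E \<gamma>21 + (\<partial>F0) E\<close>. Since \<open>\<gamma>21\<^sup>2 = -1\<close>, \<open>\<gamma>0\<close> commutes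
  with \<open>E\<close> and \<open>\<partial>S = -m F0 \<gamma>0 F0\<^sup>-\<^sup>1\<close>, the term \<open>(\<partial>S) F0 E \<gamma>21 \<gamma>21\<close> equals
  \<open>m F0 E \<gamma>0\<close>, so the free Dirac-Hestenes equation reduces to \<open>(\<partial>F0) E \<gamma>21 = 0\<close>;
  as \<open>E\<close> and \<open>\<gamma>21\<close> are invertible, \<open>\<partial>F0 = 0\<close>.\<close>

definition blade_inversions :: "4 set \<Rightarrow> 4 set \<Rightarrow> nat" where
  "blade_inversions A B = card {(i, j). i \<in> A \<and> j \<in> B \<and> j < i}"

lemma blade_sign_eq: "blade_sign A B = (-1) ^ blade_inversions A B * (\<Prod>i\<in>A \<inter> B. eta i)"
  by (simp add: blade_sign_def blade_inversions_def)

lemma blade_inversions_Un_left: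
  assumes "U \<inter> V = {}"
  shows "blade_inversions (U \<union> V) C = blade_inversions U C + blade_inversions V C"
proof -
  have "{(i, j). i \<in> U \<union> V \<and> j \<in> C \<and> j < i} =
      {(i, j). i \<in> U \<and> j \<in> C \<and> j < i} \<union> {(i, j). i \<in> V \<and> j \<in> C \<and> j < i}" by auto
  then show ?thesis unfolding blade_inversions_def
    by (simp only:) (rule card_Un_disjoint; use assms in auto)
qed

lemma blade_inversions_Un_right:
  assumes "U \<inter> V = {}"
  shows "blade_inversions C (U \<union> V) = blade_inversions C U + blade_inversions C V"
proof -
  have "{(i, j). i \<in> C \<and> j \<in> U \<union> V \<and> j < i} =
      {(i, j). i \<in> C \<and> j \<in> U \<and> j < i} \<union> {(i, j). i \<in> C \<and> j \<in> V \<and> j < i}" by auto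
  then show ?thesis unfolding blade_inversions_def
    by (simp only:) (rule card_Un_disjoint; use assms in auto)
qed

lemma blade_inversions_symdiff_left:
  "blade_inversions ((X - Y) \<union> (Y - X)) C + 2 * blade_inversions (X \<inter> Y) C
   = blade_inversions X C + blade_inversions Y C"
proof -
  have "X = (X - Y) \<union> (X \<inter> Y)" "Y = (Y - X) \<union> (X \<inter> Y)" by auto
  then have "blade_inversions X C = blade_inversions (X - Y) C + blade_inversions (X \<inter> Y) C"
    "blade_inversions Y C = blade_inversions (Y - X) C + blade_inversions (X \<inter> Y) C"
    by (metis Diff_disjoint inf_commute inf_left_commute blade_inversions_Un_left Int_Diff_disjoint)+
  moreover have "blade_inversions ((X - Y) \<union> (Y - X)) C
      = blade_inversions (X - Y) C + blade_inversions (Y - X) C"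
    by (rule blade_inversions_Un_left) auto
  ultimately show ?thesis by simp
qed

lemma blade_inversions_symdiff_right:
  "blade_inversions C ((X - Y) \<union> (Y - X)) + 2 * blade_inversions C (X \<inter> Y)
   = blade_inversions C X + blade_inversions C Y"
proof -
  have "X = (X - Y) \<union> (X \<inter> Y)" "Y = (Y - X) \<union> (X \<inter> Y)" by auto
  then have "blade_inversions C X = blade_inversions C (X - Y) + blade_inversions C (X \<inter> Y)"
    "blade_inversions C Y = blade_inversions C (Y - X) + blade_inversions C (X \<inter> Y)"
    by (metis Diff_disjoint inf_commute inf_left_commute blade_inversions_Un_right Int_Diff_disjoint)+
  moreover have "blade_inversions C ((X - Y) \<union> (Y - X))
      = blade_inversions C (X - Y) + blade_inversions C (Y - X)"
    by (rule blade_inversions_Un_right) auto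
  ultimately show ?thesis by simp
qed

lemma minus_one_power_add_eq_mod_2:
  assumes "a + b + 2 * p = c + d + 2 * (q::nat)"
  shows "(-1::real) ^ a * (-1) ^ b = (-1) ^ c * (-1) ^ d"
proof -
  have "(-1::real) ^ a * (-1) ^ b = (-1) ^ (a + b + 2 * p)" by (simp add: power_add power_mult)
  also have "\<dots> = (-1) ^ (c + d + 2 * q)" using assms by simp
  finally show ?thesis by (simp add: power_add power_mult)
qed

lemma prod_eta_symdiff:
  "(\<Prod>i\<in>A \<inter> B. eta i) * (\<Prod>i\<in>((A - B) \<union> (B - A)) \<inter> C. eta i)
   = (\<Prod>i\<in>(A \<inter> B) \<union> (A \<inter> C) \<union> (B \<inter> C). eta i)"
proof -
  have "(A \<inter> B) \<union> (A \<inter> C) \<union> (B \<inter> C) = (A \<inter> B) \<union> (((A - B) \<union> (B - A)) \<inter> C)" by auto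
  moreover have "(A \<inter> B) \<inter> (((A - B) \<union> (B - A)) \<inter> C) = {}" by auto
  ultimately show ?thesis by (simp add: prod.union_disjoint)
qed

lemma blade_sign_cocycle:
  "blade_sign A B * blade_sign ((A - B) \<union> (B - A)) C
   = blade_sign B C * blade_sign A ((B - C) \<union> (C - B))"
proof -
  have metric: "(\<Prod>i\<in>A \<inter> B. eta i) * (\<Prod>i\<in>((A - B) \<union> (B - A)) \<inter> C. eta i)
      = (\<Prod>i\<in>B \<inter> C. eta i) * (\<Prod>i\<in>A \<inter> ((B - C) \<union> (C - B)). eta i)"
    using prod_eta_symdiff[of A B C] prod_eta_symdiff[of B C A] by (simp add: Int_commute Un_ac)
  have sign: "(-1::real) ^ blade_inversions A B * (-1) ^ blade_inversions ((A - B) \<union> (B - A)) C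
      = (-1) ^ blade_inversions B C * (-1) ^ blade_inversions A ((B - C) \<union> (C - B))"
    by (rule minus_one_power_add_eq_mod_2[where p = "blade_inversions (A \<inter> B) C"
          and q = "blade_inversions A (B \<inter> C)"])
      (use blade_inversions_symdiff_left[of A B C] blade_inversions_symdiff_right[of A B C] in linarith)
  show ?thesis unfolding blade_sign_eq
    using arg_cong2[OF sign metric, of "(*)"] by (simp only: mult_ac)
qed

definition blade :: "4 set \<Rightarrow> mv" where
  "blade A = axis A 1"

lemma cl_mult_component: "(a \<odot> b) $ C = (\<Sum>A\<in>UNIV. \<Sum>B\<in>UNIV.
   (if (A - B) \<union> (B - A) = C then blade_sign A B else 0) * a $ A * b $ B)"
  unfolding cl_mult_def by simp (intro sum.cong refl; simp)

lemma bounded_bilinear_cl_mult: "bounded_bilinear cl_mult"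
proof -
  have "bilinear cl_mult"
    unfolding bilinear_def
    by (auto simp: linear_iff vec_eq_iff cl_mult_component sum.distrib sum_distrib_left algebra_simps)
  then show ?thesis using bilinear_conv_bounded_bilinear by blast
qed

interpretation cl: bounded_bilinear cl_mult
  by (rule bounded_bilinear_cl_mult)

lemma mv_blade_expansion: "a = (\<Sum>A\<in>UNIV. (a $ A) *\<^sub>R blade A)"
  by (simp add: vec_eq_iff blade_def axis_def if_distrib cong: if_cong)

lemma blade_mult: "blade A \<odot> blade B = blade_sign A B *\<^sub>R blade ((A - B) \<union> (B - A))"
proof -
  have "(if (X - Y) \<union> (Y - X) = C then blade_sign X Y else 0) * blade A $ X * blade B $ Y
     = (if X = A then if Y = B then if (A - B) \<union> (B - A) = C then blade_sign A B else 0 else 0 else 0)"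
    for C X Y by (simp add: blade_def axis_def)
  moreover have "(\<Sum>y\<in>Y. if P then f y else 0) = (if P then (\<Sum>y\<in>Y. f y) else 0)"
    for P Y and f :: "4 set \<Rightarrow> real" by simp
  ultimately show ?thesis
    by (simp only: vec_eq_iff cl_mult_component) (simp add: blade_def axis_def)
qed

lemma cl_mult_assoc: "(a \<odot> b) \<odot> c = a \<odot> (b \<odot> c)"
proof -
  have blade_assoc: "(blade A \<odot> blade B) \<odot> blade C = blade A \<odot> (blade B \<odot> blade C)" for A B C
  proof -
    have "(((A - B) \<union> (B - A)) - C) \<union> (C - ((A - B) \<union> (B - A)))
       = (A - ((B - C) \<union> (C - B))) \<union> (((B - C) \<union> (C - B)) - A)" by blast
    then show ?thesis
      by (simp add: blade_mult cl.scaleR_left cl.scaleR_right blade_sign_cocycle mult.commute)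
  qed
  show ?thesis
    by (subst (1 2) mv_blade_expansion[of a], subst (1 2) mv_blade_expansion[of b],
        subst (1 2) mv_blade_expansion[of c])
      (simp add: cl.sum_left cl.sum_right cl.scaleR_left cl.scaleR_right scaleR_sum_right
        blade_assoc mult_ac)
qed

lemma scal_eq_scaleR: "scal r = r *\<^sub>R scal 1"
  by (simp add: vec_eq_iff scal_def)

lemma scal_1_eq_blade: "scal 1 = blade {}"
  by (simp add: vec_eq_iff scal_def blade_def axis_def)

lemma gam_eq_blade: "gam \<mu> = blade {\<mu>}"
  by (simp add: vec_eq_iff gam_def blade_def axis_def)

lemma scal_mult_left: "scal r \<odot> a = r *\<^sub>R a"
proof -
  have "scal 1 \<odot> a = a"
    by (subst (1 2) mv_blade_expansion[of a])
      (simp add: scal_1_eq_blade cl.sum_right cl.scaleR_right blade_mult blade_sign_def)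
  then show ?thesis by (subst scal_eq_scaleR) (simp add: cl.scaleR_left)
qed

lemma scal_mult_right: "a \<odot> scal r = r *\<^sub>R a"
proof -
  have "a \<odot> scal 1 = a"
    by (subst (1 2) mv_blade_expansion[of a])
      (simp add: scal_1_eq_blade cl.sum_left cl.scaleR_left blade_mult blade_sign_def)
  then show ?thesis by (subst scal_eq_scaleR) (simp add: cl.scaleR_right)
qed

lemmas four_order_simps = less_bit0_def bit0.Rep_numeral bit0.Rep_1 bit0.Rep_0

lemma gam21_eq_blade: "gam21 = - blade {1,2}"
proof -
  have "{(i, j). i \<in> {2::4} \<and> j \<in> {1} \<and> j < i} = {(2,1)}"
    and "({2::4} - {1}) \<union> ({1} - {2}) = {1,2}"
    by (auto simp: four_order_simps)
  then show ?thesis unfolding gam21_def gam_eq_blade blade_mult blade_sign_def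
    by (simp add: four_order_simps)
qed

lemma gam21_mult_gam21: "gam21 \<odot> gam21 = - scal 1"
proof -
  have "{(i, j). i \<in> {1::4,2} \<and> j \<in> {1,2} \<and> j < i} = {(2,1)}"
    and "(\<Prod>i\<in>{1::4,2} \<inter> {1,2}. eta i) = 1"
    by (auto simp: eta_def four_order_simps)
  then show ?thesis
    unfolding gam21_eq_blade cl.minus_left cl.minus_right minus_minus blade_mult blade_sign_def
    by (simp add: scal_1_eq_blade)
qed

lemma gam0_gam21_commute: "gam 0 \<odot> gam21 = gam21 \<odot> gam 0"
proof -
  have c1: "{(i, j). i \<in> {0::4} \<and> j \<in> {1,2} \<and> j < i} = {}"
    and c2: "{(i, j). i \<in> {1::4,2} \<and> j \<in> {0} \<and> j < i} = {(1,0),(2,0)}"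
    and i: "{0::4} \<inter> {1,2} = {}" "{1::4,2} \<inter> {0} = {}"
    and d: "({0::4} - {1,2}) \<union> ({1,2} - {0}) = ({1,2} - {0}) \<union> ({0} - {1,2})"
    by (auto simp: four_order_simps)
  show ?thesis
    unfolding gam21_eq_blade cl.minus_left cl.minus_right gam_eq_blade blade_mult blade_sign_def
      c1 c2 i d
    by (simp add: four_order_simps)
qed

lemma exp21_eq: "exp21 s = cos s *\<^sub>R scal 1 + sin s *\<^sub>R gam21"
  unfolding exp21_def by (subst scal_eq_scaleR) (rule refl)

lemma exp21_mult_exp21_minus: "exp21 s \<odot> exp21 (- s) = scal 1"
proof -
  have "exp21 s \<odot> exp21 (- s) = (cos s * cos s) *\<^sub>R scal 1 + (sin s * sin s) *\<^sub>R scal 1"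
    unfolding exp21_eq
    by (simp add: cl.add_left cl.add_right cl.scaleR_left cl.scaleR_right scal_mult_left
        scal_mult_right gam21_mult_gam21 cl.diff_left cl.diff_right algebra_simps)
  also have "\<dots> = (cos s * cos s + sin s * sin s) *\<^sub>R scal 1"
    by (simp only: scaleR_add_left)
  finally show ?thesis
    by (metis sin_cos_squared_add power2_eq_square add.commute scaleR_one)
qed

lemma gam0_exp21_commute: "gam 0 \<odot> exp21 s = exp21 s \<odot> gam 0"
  unfolding exp21_def
  by (simp add: cl.add_left cl.add_right cl.scaleR_left cl.scaleR_right scal_mult_left
      scal_mult_right gam0_gam21_commute)

lemma exp21_has_derivative:
  assumes "(S has_derivative S') (at x)"
  shows "((\<lambda>y. exp21 (S y)) has_derivative (\<lambda>h. S' h *\<^sub>R (exp21 (S x) \<odot> gam21))) (at x)"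
proof -
  have e: "exp21 (S x) \<odot> gam21 = (- sin (S x)) *\<^sub>R scal 1 + cos (S x) *\<^sub>R gam21"
    unfolding exp21_eq
    by (simp add: cl.add_left cl.scaleR_left scal_mult_left gam21_mult_gam21 add.commute)
  have "(\<lambda>h. S' h *\<^sub>R (exp21 (S x) \<odot> gam21))
      = (\<lambda>h. (S' h * - sin (S x)) *\<^sub>R scal 1 + (S' h * cos (S x)) *\<^sub>R gam21)"
    unfolding e by (simp only: scaleR_add_right scaleR_scaleR)
  then show ?thesis
    unfolding exp21_eq by (auto intro!: derivative_eq_intros assms)
qed

lemma pd_scal:
  assumes "(S has_derivative S') (at x)"
  shows "pd \<mu> (\<lambda>y. scal (S y)) x = scal (S' (axis \<mu> 1))"
proof -
  have "linear scal"
    by (auto simp: linear_iff vec_eq_iff scal_def)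
  then have "bounded_linear scal"
    using linear_conv_bounded_linear by blast
  then have "((\<lambda>y. scal (S y)) has_derivative (\<lambda>h. scal (S' h))) (at x)"
    using assms by (rule bounded_linear.has_derivative)
  from frechet_derivative_at[OF this] show ?thesis
    unfolding pd_def by metis
qed

lemma pd_mult_exp21:
  assumes "(S has_derivative S') (at x)" and "(F has_derivative F') (at x)"
  shows "pd \<mu> (\<lambda>y. F y \<odot> exp21 (S y)) x
     = F x \<odot> (S' (axis \<mu> 1) *\<^sub>R (exp21 (S x) \<odot> gam21)) + F' (axis \<mu> 1) \<odot> exp21 (S x)"
proof -
  have "((\<lambda>y. F y \<odot> exp21 (S y)) has_derivative
     (\<lambda>h. F x \<odot> (S' h *\<^sub>R (exp21 (S x) \<odot> gam21)) + F' h \<odot> exp21 (S x))) (at x)"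
    by (rule cl.FDERIV[OF assms(2) exp21_has_derivative[OF assms(1)]])
  from frechet_derivative_at[OF this, symmetric] show ?thesis
    unfolding pd_def by simp
qed

text \<open>The Leibniz rule: since \<open>\<partial>\<^sub>\<mu>S\<close> is a scalar it can be moved to the left of \<open>F\<close>,
  where it combines with \<open>\<gamma>\<^sup>\<mu>\<close> into \<open>\<partial>S\<close>.\<close>

lemma dirac_mult_exp21:
  assumes "S differentiable (at x)" and "F differentiable (at x)"
  shows "dirac (\<lambda>y. F y \<odot> exp21 (S y)) x
    = dirac (\<lambda>y. scal (S y)) x \<odot> F x \<odot> exp21 (S x) \<odot> gam21 + dirac F x \<odot> exp21 (S x)"
proof -
  define S' where "S' = frechet_derivative S (at x)"
  define F' where "F' = frechet_derivative F (at x)"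
  have dS: "(S has_derivative S') (at x)" and dF: "(F has_derivative F') (at x)"
    using assms frechet_derivative_works unfolding S'_def F'_def by blast+
  have pd_F: "pd \<mu> F x = F' (axis \<mu> 1)" for \<mu>
    unfolding pd_def F'_def ..
  let ?E = "exp21 (S x)"
  have "gam \<mu> \<odot> pd \<mu> (\<lambda>y. F y \<odot> exp21 (S y)) x
      = gam \<mu> \<odot> pd \<mu> (\<lambda>y. scal (S y)) x \<odot> F x \<odot> ?E \<odot> gam21 + gam \<mu> \<odot> pd \<mu> F x \<odot> ?E" for \<mu>
    unfolding pd_mult_exp21[OF dS dF] pd_scal[OF dS] pd_F
    by (simp add: cl.add_right cl.scaleR_right cl.scaleR_left scal_mult_right cl_mult_assoc)
  then show ?thesis
    unfolding dirac_def by (simp add: sum.distrib cl.sum_left)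
qed

lemma cl_inv_mult_left: "cl_invertible a \<Longrightarrow> cl_inv a \<odot> a = scal 1"
  unfolding cl_invertible_def cl_inv_def by (rule someI2_ex) auto

lemma massless_of_phase_equations:
  assumes inv: "G \<odot> F = scal 1"
    and phase: "- dS = m *\<^sub>R (F \<odot> gam 0 \<odot> G)"
    and free: "dS \<odot> F \<odot> E \<odot> gam21 \<odot> gam21 + P \<odot> E \<odot> gam21 - m *\<^sub>R (F \<odot> E \<odot> gam 0) = 0"
    and E_inv: "E \<odot> E' = scal 1"
    and E_comm: "gam 0 \<odot> E = E \<odot> gam 0"
  shows "P = 0"
proof -
  have dS: "dS = - (m *\<^sub>R (F \<odot> gam 0 \<odot> G))"
    using phase by (metis minus_minus)
  have "dS \<odot> F \<odot> E \<odot> gam21 \<odot> gam21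
      = - (m *\<^sub>R (F \<odot> gam 0 \<odot> (G \<odot> F) \<odot> E \<odot> (gam21 \<odot> gam21)))"
    unfolding dS by (simp add: cl.minus_left cl.scaleR_left cl_mult_assoc)
  also have "\<dots> = m *\<^sub>R (F \<odot> (gam 0 \<odot> E))"
    by (simp add: inv gam21_mult_gam21 scal_mult_left scal_mult_right cl.minus_right cl_mult_assoc)
  also have "\<dots> = m *\<^sub>R (F \<odot> E \<odot> gam 0)"
    by (simp add: E_comm cl_mult_assoc)
  finally have "P \<odot> E \<odot> gam21 = 0"
    using free by simp
  have "P = - (P \<odot> E \<odot> (gam21 \<odot> gam21) \<odot> E')"
    by (simp add: gam21_mult_gam21 cl.minus_left cl.minus_right scal_mult_right cl_mult_assoc E_inv)
  also have "\<dots> = - (P \<odot> E \<odot> gam21 \<odot> gam21 \<odot> E')"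
    by (simp only: cl_mult_assoc)
  also have "\<dots> = 0"
    using \<open>P \<odot> E \<odot> gam21 = 0\<close> by (simp add: cl.zero_left)
  finally show ?thesis .
qed

theorem mainTheorem2:
  fixes m :: real and S :: "real^4 \<Rightarrow> real" and F0 :: "real^4 \<Rightarrow> mv"
  assumes "m > 0"
    and "smooth S"
    and "smooth F0"
    and "\<forall>x. even_mv (F0 x)"
    and "\<forall>x. cl_invertible (F0 x)"
    and "\<forall>x. - dirac (\<lambda>y. scal (S y)) x = m *\<^sub>R (F0 x \<odot> gam 0 \<odot> cl_inv (F0 x))"
    and "\<forall>x. dirac (\<lambda>y. F0 y \<odot> exp21 (S y)) x \<odot> gam21
              - m *\<^sub>R (F0 x \<odot> exp21 (S x) \<odot> gam 0) = 0"
  shows "\<forall>x. dirac F0 x = 0"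
proof
  fix x
  have "S differentiable (at x)" "F0 differentiable (at x)"
    using assms(2,3) unfolding smooth_def by (metis Ck.simps(2))+
  note leibniz = dirac_mult_exp21[OF this]
  show "dirac F0 x = 0"
  proof (rule massless_of_phase_equations)
    show "cl_inv (F0 x) \<odot> F0 x = scal 1"
      using assms(5) by (simp add: cl_inv_mult_left)
    show "- dirac (\<lambda>y. scal (S y)) x = m *\<^sub>R (F0 x \<odot> gam 0 \<odot> cl_inv (F0 x))"
      using assms(6) by blast
    show "dirac (\<lambda>y. scal (S y)) x \<odot> F0 x \<odot> exp21 (S x) \<odot> gam21 \<odot> gam21
        + dirac F0 x \<odot> exp21 (S x) \<odot> gam21 - m *\<^sub>R (F0 x \<odot> exp21 (S x) \<odot> gam 0) = 0"
      using spec[OF assms(7), of x] unfolding leibniz cl.add_left .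
  qed (rule exp21_mult_exp21_minus, rule gam0_exp21_commute)
qed

end
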